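(* Let $p_n=\log(n^4)/n$ and assume $n$ is large enough that $0\le p_n\le 1/\sqrt2$. Then $$\mathcal{I}_0\le\exp\!\Big(p_n^2\big(\phi_{\max}/\phi_{\min}-1\big)^2\Big).$$
   Context: Fix a prompt $x$, a countable response space, full-support conditional distributions $\pi_{\mathrm{target}},\pi_{\mathrm{gen}}$, a reward $r$, $\beta>0$. Let $\phi_\beta(y|x)=\frac{\pi_{\mathrm{target}}(y|x)}{\pi_{\mathrm{gen}}(y|x)}e^{\beta r(y|x)}$, $\phi_{\max}=\max_{x,y}\phi_\beta(y|x)$, $\phi_{\min}=\min_{x,y}\phi_\beta(y|x)$, and $\Phi_\beta(s)=\mathbb{E}_{Y\sim\pi_{\mathrm{gen}}(\cdot|x)}[e^{-s\phi_\beta(Y|x)}]$ for $s\ge0$. Let $\mathcal{R}_0=\{(s_1,s_2)\in[0,\infty)^2:\min\{\Phi_\beta(s_1),\Phi_\beta(s_2)\}\ge1-p_n\}$ and $$\mathcal{I}_0=\frac{1}{1-e^{-n}}\int_{\mathcal{R}_0}\big(n^2\Phi_\beta(s_1)\Phi_\beta(s_2)+n\big)\big(-\Phi_\beta'(0)\big)\big(-\Phi_\beta'(s_1+s_2)\big)\exp\big(n[\Phi_\beta(s_1)\Phi_\beta(s_2)-1]\big)\,ds_1\,ds_2.$$ *)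

theory Defs
  imports "HOL-Analysis.Analysis"
begin

definition phi_beta ::
  "('x \<Rightarrow> 'y \<Rightarrow> real) \<Rightarrow> ('x \<Rightarrow> 'y \<Rightarrow> real) \<Rightarrow> ('x \<Rightarrow> 'y \<Rightarrow> real) \<Rightarrow> real \<Rightarrow> 'x \<Rightarrow> 'y \<Rightarrow> real"
  where "phi_beta pt pg r \<beta> x y = pt x y / pg x y * exp (\<beta> * r x y)"

definition Phi_beta ::
  "('x \<Rightarrow> 'y \<Rightarrow> real) \<Rightarrow> ('x \<Rightarrow> 'y \<Rightarrow> real) \<Rightarrow> 'x \<Rightarrow> real \<Rightarrow> real"
  where "Phi_beta pg \<phi> x s = (\<Sum>\<^sub>\<infinity>y. pg x y * exp (- s * \<phi> x y))"

definition R0 :: "(real \<Rightarrow> real) \<Rightarrow> real \<Rightarrow> (real \<times> real) set"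
  where "R0 \<Phi> p = {(s1, s2). 0 \<le> s1 \<and> 0 \<le> s2 \<and> min (\<Phi> s1) (\<Phi> s2) \<ge> 1 - p}"

definition I0 :: "(real \<Rightarrow> real) \<Rightarrow> nat \<Rightarrow> real \<Rightarrow> real"
  where "I0 \<Phi> n p = 1 / (1 - exp (- real n)) *
     (LINT z : R0 \<Phi> p | lborel.
        (real n ^ 2 * \<Phi> (fst z) * \<Phi> (snd z) + real n) * (- deriv \<Phi> 0)
        * (- deriv \<Phi> (fst z + snd z))
        * exp (real n * (\<Phi> (fst z) * \<Phi> (snd z) - 1)))"

end

theory Submission
  imports Defs "HOL-Probability.Hoeffding"
begin

(* Write Phi(s) = sum_y w(y) exp(-s f(y)) with w = pi_gen(.|x) and f = phi_beta(.|x), so that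
   f takes values in [phi_min, phi_max], and D = -Phi', the same transform of the weights w f.
   Points of R_0 satisfy exp(-2 p) <= 1 - p <= Phi(s) <= exp(-s phi_min), hence R_0 lies in the
   square [0,T]^2 with T = 2 p / phi_min. For s1, s2 in [0,T], Cauchy-Schwarz together with the
   Kantorovich inequality for exp(-s f), whose range has Kantorovich constant
   cosh^2(s (phi_max - phi_min) / 2) <= C = exp(p^2 (phi_max / phi_min - 1)^2), gives
   D(0) D(s1 + s2) <= C D(s1) D(s2). So the integrand of I_0 is at most C times the mixed partial
   derivative of exp(n (Phi(s1) Phi(s2) - 1)), whose integral over the square is at most
   1 - exp(-n). *)

lemma summable_on_mult_bounded:
  fixes w g :: "'y \<Rightarrow> real"
  assumes w: "w summable_on UNIV" "\<And>y. 0 \<le> w y"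
    and g: "\<And>y. \<bar>g y\<bar> \<le> C"
  shows "(\<lambda>y. w y * g y) summable_on UNIV"
proof -
  have "(\<lambda>y. norm (w y * g y)) summable_on UNIV"
  proof (rule summable_on_comparison_test)
    show "(\<lambda>y. w y * C) summable_on UNIV"
      using w(1) by (rule summable_on_cmult_left)
    show "norm (w y * g y) \<le> w y * C" for y
      using w(2)[of y] g[of y] by (simp add: abs_mult mult_left_mono)
  qed simp
  then show ?thesis
    by (rule summable_on_iff_abs_summable_on_real[THEN iffD2])
qed

lemma infsum_mult_bounds:
  fixes w g :: "'y \<Rightarrow> real"
  assumes w: "w summable_on UNIV" "\<And>y. 0 \<le> w y"
    and g: "\<And>y. lo \<le> g y \<and> g y \<le> hi"
  shows "lo * infsum w UNIV \<le> (\<Sum>\<^sub>\<infinity>y. w y * g y)"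
    and "(\<Sum>\<^sub>\<infinity>y. w y * g y) \<le> hi * infsum w UNIV"
proof -
  have g_abs: "\<bar>g y\<bar> \<le> \<bar>lo\<bar> + \<bar>hi\<bar>" for y
  proof (rule abs_leI)
    show "g y \<le> \<bar>lo\<bar> + \<bar>hi\<bar>" using g[of y] abs_ge_self[of hi] abs_ge_zero[of lo] by linarith
    show "- g y \<le> \<bar>lo\<bar> + \<bar>hi\<bar>" using g[of y] abs_ge_minus_self[of lo] abs_ge_zero[of hi] by linarith
  qed
  have wg: "(\<lambda>y. w y * g y) summable_on UNIV"
    by (rule summable_on_mult_bounded[OF w g_abs])
  have "(\<Sum>\<^sub>\<infinity>y. w y * lo) \<le> (\<Sum>\<^sub>\<infinity>y. w y * g y)"
    using w g by (intro infsum_mono wg summable_on_cmult_left mult_left_mono) auto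
  then show "lo * infsum w UNIV \<le> (\<Sum>\<^sub>\<infinity>y. w y * g y)"
    using infsum_cmult_left[OF w(1), of lo] by (simp add: mult.commute)
  have "(\<Sum>\<^sub>\<infinity>y. w y * g y) \<le> (\<Sum>\<^sub>\<infinity>y. w y * hi)"
    using w g by (intro infsum_mono wg summable_on_cmult_left mult_left_mono) auto
  then show "(\<Sum>\<^sub>\<infinity>y. w y * g y) \<le> hi * infsum w UNIV"
    using infsum_cmult_left[OF w(1), of hi] by (simp add: mult.commute)
qed

lemma abs_exp_neg_minus_one_plus_le:
  fixes x :: real
  assumes "\<bar>x\<bar> \<le> 1"
  shows "\<bar>exp (- x) - 1 + x\<bar> \<le> x\<^sup>2"
proof -
  have "exp (- x) \<le> 1 - x + x\<^sup>2"
  proof (cases "x \<le> 0")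
    case True
    then show ?thesis using exp_bound[of "- x"] assms by simp
  next
    case False
    have "1 \<le> (1 - x + x\<^sup>2) * (1 + x)"
      using False by (simp add: algebra_simps power2_eq_square)
    also have "\<dots> \<le> (1 - x + x\<^sup>2) * exp x"
    proof (rule mult_left_mono[OF exp_ge_add_one_self])
      show "0 \<le> 1 - x + x\<^sup>2"
        using assms by (simp add: power2_eq_square)
    qed
    finally show ?thesis by (simp add: exp_minus field_simps)
  qed
  then show ?thesis using exp_minus_ge[of x] by (simp add: abs_le_iff)
qed

lemma exp_neg_two_mult_le_one_minus:
  fixes p :: real
  assumes p: "0 \<le> p" "p \<le> 1 / sqrt 2"
  shows "exp (- 2 * p) \<le> 1 - p"
proof -
  have "p\<^sup>2 \<le> 1 / 2"
    using power_mono[OF p(2) p(1), of 2] by (simp add: power_divide)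
  then have "0 \<le> p * (1 - 2 * p\<^sup>2)"
    using p(1) by (intro mult_nonneg_nonneg) auto
  then have "1 \<le> (1 + 2 * p + (2 * p)\<^sup>2 / 2) * (1 - p)"
    by (simp add: algebra_simps power2_eq_square)
  also have "\<dots> \<le> exp (2 * p) * (1 - p)"
  proof (rule mult_right_mono[OF exp_lower_Taylor_quadratic])
    have "1 / sqrt 2 \<le> (1 :: real)"
      by (simp add: divide_le_eq)
    then show "0 \<le> 1 - p"
      using p(2) by linarith
  qed (use p(1) in simp)
  finally show ?thesis
    by (simp add: exp_minus field_simps)
qed

lemma exp_neg_mult_le:
  fixes s t B :: real
  assumes "\<bar>t\<bar> \<le> B"
  shows "exp (- s * t) \<le> exp (\<bar>s\<bar> * B)"
proof -
  have "- s * t \<le> \<bar>s\<bar> * \<bar>t\<bar>"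
    using abs_ge_self[of "- s * t"] by (simp add: abs_mult)
  also have "\<dots> \<le> \<bar>s\<bar> * B"
    using assms by (simp add: mult_left_mono)
  finally show ?thesis by simp
qed

definition laplace_sum :: "('y \<Rightarrow> real) \<Rightarrow> ('y \<Rightarrow> real) \<Rightarrow> real \<Rightarrow> real"
  where "laplace_sum w f s = (\<Sum>\<^sub>\<infinity>y. w y * exp (- s * f y))"

lemma summable_on_laplace_sum:
  fixes w f :: "'y \<Rightarrow> real"
  assumes w: "w summable_on UNIV" "\<And>y. 0 \<le> w y" and f: "\<And>y. \<bar>f y\<bar> \<le> B"
  shows "(\<lambda>y. w y * exp (- s * f y)) summable_on UNIV"
proof (rule summable_on_mult_bounded[OF w])
  show "\<bar>exp (- s * f y)\<bar> \<le> exp (\<bar>s\<bar> * B)" for y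
    unfolding abs_of_pos[OF exp_gt_zero] by (rule exp_neg_mult_le[OF f])
qed

lemma laplace_sum_le:
  fixes w f :: "'y \<Rightarrow> real"
  assumes w: "w summable_on UNIV" "\<And>y. 0 \<le> w y" and f: "\<And>y. m \<le> f y" and s: "0 \<le> s"
  shows "laplace_sum w f s \<le> exp (- s * m) * infsum w UNIV"
  unfolding laplace_sum_def
  by (rule infsum_mult_bounds(2)[OF w, where lo = 0]) (use f s in \<open>simp add: mult_left_mono\<close>)

lemma exp_neg_mult_remainder_le:
  fixes s h t B :: real
  assumes t: "\<bar>t\<bar> \<le> B" and h: "\<bar>h\<bar> * B \<le> 1"
  shows "\<bar>exp (- (s + h) * t) - exp (- s * t) + h * (t * exp (- s * t))\<bar>
           \<le> exp (\<bar>s\<bar> * B) * (h\<^sup>2 * B\<^sup>2)"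
proof -
  have "\<bar>h * t\<bar> \<le> \<bar>h\<bar> * B"
    unfolding abs_mult by (rule mult_left_mono[OF t]) simp
  then have "\<bar>exp (- (h * t)) - 1 + h * t\<bar> \<le> (h * t)\<^sup>2"
    using h by (intro abs_exp_neg_minus_one_plus_le) linarith
  also have "\<dots> = h\<^sup>2 * \<bar>t\<bar>\<^sup>2"
    by (simp add: power_mult_distrib)
  also have "\<dots> \<le> h\<^sup>2 * B\<^sup>2"
    by (intro mult_left_mono power_mono t) auto
  finally have remainder: "\<bar>exp (- (h * t)) - 1 + h * t\<bar> \<le> h\<^sup>2 * B\<^sup>2" .
  have "exp (- (s + h) * t) = exp (- s * t) * exp (- (h * t))"
    by (subst exp_add[symmetric]) (simp add: algebra_simps)
  then have eq: "exp (- (s + h) * t) - exp (- s * t) + h * (t * exp (- s * t))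
      = exp (- s * t) * (exp (- (h * t)) - 1 + h * t)"
    by (simp add: algebra_simps)
  show ?thesis
    unfolding eq abs_mult using exp_neg_mult_le[OF t, of s] remainder by (intro mult_mono) auto
qed

lemma laplace_sum_remainder:
  fixes w f :: "'y \<Rightarrow> real"
  assumes w: "w summable_on UNIV" "\<And>y. 0 \<le> w y" and f: "\<And>y. \<bar>f y\<bar> \<le> B"
    and h: "\<bar>h\<bar> * B \<le> 1"
  shows "\<bar>laplace_sum w f (s + h) - laplace_sum w f s + h * laplace_sum (\<lambda>y. w y * f y) f s\<bar>
           \<le> exp (\<bar>s\<bar> * B) * B\<^sup>2 * infsum w UNIV * h\<^sup>2"
proof -
  define K where "K = exp (\<bar>s\<bar> * B) * (h\<^sup>2 * B\<^sup>2)"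
  define R where "R y = exp (- (s + h) * f y) - exp (- s * f y) + h * (f y * exp (- s * f y))" for y
  have R: "- K \<le> R y \<and> R y \<le> K" for y
    using exp_neg_mult_remainder_le[OF f[of y] h, where s = s] by (auto simp: R_def K_def abs_le_iff)
  have a: "(\<lambda>y. w y * exp (- (s + h) * f y)) summable_on UNIV"
    by (rule summable_on_laplace_sum[OF w f])
  have b: "(\<lambda>y. - (w y * exp (- s * f y))) summable_on UNIV"
    unfolding summable_on_uminus by (rule summable_on_laplace_sum[OF w f])
  have c: "(\<lambda>y. h * (w y * (f y * exp (- s * f y)))) summable_on UNIV"
  proof (intro summable_on_cmult_right summable_on_mult_bounded[OF w])
    show "\<bar>f y * exp (- s * f y)\<bar> \<le> B * exp (\<bar>s\<bar> * B)" for y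
      unfolding abs_mult using f[of y] exp_neg_mult_le[OF f, of s y] by (intro mult_mono) auto
  qed
  have "(\<Sum>\<^sub>\<infinity>y. w y * R y)
      = (\<Sum>\<^sub>\<infinity>y. w y * exp (- (s + h) * f y) + (- (w y * exp (- s * f y))
          + h * (w y * (f y * exp (- s * f y)))))"
    by (rule infsum_cong) (simp add: R_def algebra_simps)
  also have "\<dots> = laplace_sum w f (s + h) - laplace_sum w f s + h * laplace_sum (\<lambda>y. w y * f y) f s"
    unfolding infsum_add[OF a summable_on_add[OF b c]] infsum_add[OF b c] infsum_uminus
      infsum_cmult_right' by (simp add: laplace_sum_def mult.assoc)
  finally have eq: "(\<Sum>\<^sub>\<infinity>y. w y * R y)
      = laplace_sum w f (s + h) - laplace_sum w f s + h * laplace_sum (\<lambda>y. w y * f y) f s" .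
  have "- K * infsum w UNIV \<le> (\<Sum>\<^sub>\<infinity>y. w y * R y)" "(\<Sum>\<^sub>\<infinity>y. w y * R y) \<le> K * infsum w UNIV"
    by (rule infsum_mult_bounds[OF w R])+
  then show ?thesis
    unfolding eq abs_le_iff K_def by (auto simp: mult_ac)
qed

lemma has_field_derivative_laplace_sum:
  fixes w f :: "'y \<Rightarrow> real"
  assumes w: "w summable_on UNIV" "\<And>y. 0 \<le> w y" and f: "\<And>y. \<bar>f y\<bar> \<le> B"
  shows "(laplace_sum w f has_field_derivative - laplace_sum (\<lambda>y. w y * f y) f s) (at s)"
proof -
  define F where "F = laplace_sum w f"
  define L where "L = laplace_sum (\<lambda>y. w y * f y) f s"
  define K where "K = exp (\<bar>s\<bar> * B) * B\<^sup>2 * infsum w UNIV"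
  have "((\<lambda>h. \<bar>h\<bar> * B) \<longlongrightarrow> 0) (at 0)"
    by (intro tendsto_mult_left_zero tendsto_rabs_zero tendsto_ident_at)
  then have "\<forall>\<^sub>F h in at 0. \<bar>h\<bar> * B < 1"
    by (rule order_tendstoD(2)) simp
  with eventually_neq_at_within have "\<forall>\<^sub>F h in at 0. h \<noteq> 0 \<and> \<bar>h\<bar> * B < 1"
    by (rule eventually_conj)
  then have "\<forall>\<^sub>F h in at 0. norm ((F (s + h) - F s) / h - - L) \<le> K * \<bar>h\<bar>"
  proof (rule eventually_mono)
    fix h :: real
    assume h: "h \<noteq> 0 \<and> \<bar>h\<bar> * B < 1"
    have "\<bar>F (s + h) - F s + h * L\<bar> \<le> K * \<bar>h\<bar> * \<bar>h\<bar>"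
      using laplace_sum_remainder[OF w f, where h = h and s = s] h
      by (simp add: F_def L_def K_def power2_eq_square abs_mult_self_eq mult.assoc)
    moreover have "(F (s + h) - F s) / h - - L = (F (s + h) - F s + h * L) / h"
      using h by (simp add: field_simps)
    ultimately show "norm ((F (s + h) - F s) / h - - L) \<le> K * \<bar>h\<bar>"
      using h by (simp add: abs_divide pos_divide_le_eq)
  qed
  moreover have "((\<lambda>h. K * \<bar>h\<bar>) \<longlongrightarrow> 0) (at 0)"
    by (intro tendsto_mult_right_zero tendsto_rabs_zero tendsto_ident_at)
  ultimately have "((\<lambda>h. (F (s + h) - F s) / h - - L) \<longlongrightarrow> 0) (at 0)"
    by (rule Lim_null_comparison)
  then show ?thesis
    unfolding DERIV_def LIM_zero_iff F_def L_def .
qed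

lemma continuous_on_laplace_sum:
  fixes w f :: "'y \<Rightarrow> real"
  assumes w: "w summable_on UNIV" "\<And>y. 0 \<le> w y" and f: "\<And>y. \<bar>f y\<bar> \<le> B"
  shows "continuous_on A (laplace_sum w f)"
  using has_field_derivative_laplace_sum[OF w f]
  by (meson DERIV_isCont continuous_at_imp_continuous_on)

definition kantorovich_const :: "real \<Rightarrow> real \<Rightarrow> real"
  where "kantorovich_const m M = (m + M)\<^sup>2 / (4 * m * M)"

lemma kantorovich_inequality:
  fixes v X :: "'y \<Rightarrow> real"
  assumes v: "v summable_on UNIV" "\<And>y. 0 \<le> v y"
    and m: "0 < m" and X: "\<And>y. m \<le> X y \<and> X y \<le> M"
  shows "infsum v UNIV * (\<Sum>\<^sub>\<infinity>y. v y * (X y)\<^sup>2) \<le> kantorovich_const m M * (\<Sum>\<^sub>\<infinity>y. v y * X y)\<^sup>2"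
proof -
  define A where "A = infsum v UNIV"
  define S1 where "S1 = (\<Sum>\<^sub>\<infinity>y. v y * X y)"
  define S2 where "S2 = (\<Sum>\<^sub>\<infinity>y. v y * (X y)\<^sup>2)"
  have M: "0 < M" using X[of undefined] m by linarith
  have X_abs: "\<bar>X y\<bar> \<le> M" for y using X[of y] m by simp
  have s1: "(\<lambda>y. v y * X y) summable_on UNIV"
    by (rule summable_on_mult_bounded[OF v X_abs])
  have "\<bar>(X y)\<^sup>2\<bar> \<le> M\<^sup>2" for y
    using power_mono[OF X_abs[of y] abs_ge_zero, where n = 2] by simp
  then have s2: "(\<lambda>y. v y * (X y)\<^sup>2) summable_on UNIV"
    by (rule summable_on_mult_bounded[OF v])
  have "S2 \<le> (\<Sum>\<^sub>\<infinity>y. (m + M) * (v y * X y) + - (m * M) * v y)"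
    unfolding S2_def
  proof (intro infsum_mono s2 summable_on_add summable_on_cmult_right s1 v(1))
    fix y
    have "0 \<le> (X y - m) * (M - X y)" using X[of y] by simp
    then have "v y * (X y)\<^sup>2 \<le> v y * ((m + M) * X y - m * M)"
      by (intro mult_left_mono v(2)) (simp add: algebra_simps power2_eq_square)
    then show "v y * (X y)\<^sup>2 \<le> (m + M) * (v y * X y) + - (m * M) * v y"
      by (simp add: algebra_simps)
  qed
  also have "\<dots> = (m + M) * S1 - m * M * A"
    unfolding S1_def A_def
      infsum_add[OF summable_on_cmult_right[OF s1] summable_on_cmult_right[OF v(1)]]
      infsum_cmult_right[OF s1] infsum_cmult_right[OF v(1)] by simp
  finally have "S2 \<le> (m + M) * S1 - m * M * A" .
  then have "A * S2 \<le> A * ((m + M) * S1 - m * M * A)"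
    by (rule mult_left_mono) (simp add: A_def infsum_nonneg v(2))
  also have "\<dots> \<le> (m + M)\<^sup>2 / (4 * m * M) * S1\<^sup>2"
  proof -
    have "(m + M)\<^sup>2 * S1\<^sup>2 - 4 * m * M * (A * ((m + M) * S1 - m * M * A))
        = ((m + M) * S1 - 2 * m * M * A)\<^sup>2"
      by (simp add: power2_eq_square algebra_simps)
    then have "4 * m * M * (A * ((m + M) * S1 - m * M * A)) \<le> (m + M)\<^sup>2 * S1\<^sup>2"
      by (smt (verit) zero_le_power2)
    then show ?thesis using m M by (simp add: field_simps)
  qed
  finally show ?thesis
    unfolding A_def S1_def S2_def kantorovich_const_def .
qed

text \<open>The Kantorovich constant of \<open>[e\<^sup>a, e\<^sup>b]\<close> is \<open>cosh\<^sup>2((b - a)/2)\<close>, and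
  \<open>cosh t \<le> exp (t\<^sup>2/2)\<close> is the case \<open>p = 1/2\<close> of Hoeffding's lemma.\<close>

lemma kantorovich_const_exp_le:
  fixes a b :: real
  assumes "a \<le> b"
  shows "kantorovich_const (exp a) (exp b) \<le> exp ((b - a)\<^sup>2 / 4)"
proof -
  define y where "y = b - a"
  have y: "0 \<le> y" using assms by (simp add: y_def)
  have "exp b = exp a * exp y" by (simp add: y_def flip: exp_add)
  then have "kantorovich_const (exp a) (exp b) = ((1 + exp y) / 2)\<^sup>2 / exp y"
    by (simp add: kantorovich_const_def power2_eq_square field_simps)
  also have "\<dots> \<le> exp (y\<^sup>2 / 4)"
  proof -
    have e: "1 + 1 / 2 * (exp y - 1) = (1 + exp y) / 2"
      by (simp add: field_simps)
    have "- y * (1 / 2) + ln (1 + 1 / 2 * (exp y - 1)) \<le> y\<^sup>2 / 8"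
      using Hoeffdings_lemma_aux[of y "1 / 2"] y by simp
    then have ln_le: "ln ((1 + exp y) / 2) \<le> y / 2 + y\<^sup>2 / 8"
      unfolding e by linarith
    have "(1 + exp y) / 2 \<le> exp (y / 2 + y\<^sup>2 / 8)"
      using exp_le_cancel_iff[THEN iffD2, OF ln_le] by (simp add: add_pos_pos)
    then have "((1 + exp y) / 2)\<^sup>2 \<le> exp (y / 2 + y\<^sup>2 / 8) ^ 2"
      by (rule power_mono) (simp add: add_nonneg_nonneg)
    also have "\<dots> = exp (y + y\<^sup>2 / 4)"
    proof -
      have "2 * (y / 2 + y\<^sup>2 / 8) = y + y\<^sup>2 / 4"
        by (simp add: field_simps)
      then show ?thesis
        by (metis exp_double)
    qed
    finally show ?thesis
      by (simp add: divide_le_eq exp_add mult.commute)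
  qed
  finally show ?thesis by (simp add: y_def)
qed

lemma infsum_mult_cross_le:
  fixes v X Y :: "'y \<Rightarrow> real"
  assumes v: "v summable_on UNIV" "\<And>y. 0 \<le> v y"
    and X: "\<And>y. \<bar>X y\<bar> \<le> BX" and Y: "\<And>y. \<bar>Y y\<bar> \<le> BY"
  shows "2 * c * d * (\<Sum>\<^sub>\<infinity>y. v y * (X y * Y y))
           \<le> d\<^sup>2 * (\<Sum>\<^sub>\<infinity>y. v y * (X y)\<^sup>2) + c\<^sup>2 * (\<Sum>\<^sub>\<infinity>y. v y * (Y y)\<^sup>2)"
proof -
  have "0 \<le> BX" "0 \<le> BY"
    using X[of undefined] Y[of undefined] by linarith+
  then have XY: "\<bar>X y * Y y\<bar> \<le> BX * BY" and X2: "\<bar>(X y)\<^sup>2\<bar> \<le> BX\<^sup>2"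
    and Y2: "\<bar>(Y y)\<^sup>2\<bar> \<le> BY\<^sup>2" for y
    using mult_mono[OF X[of y] Y[of y]] power_mono[OF X[of y] abs_ge_zero, where n = 2]
      power_mono[OF Y[of y] abs_ge_zero, where n = 2]
    by (simp_all add: abs_mult)
  have sZ: "(\<lambda>y. v y * (X y * Y y)) summable_on UNIV"
    by (rule summable_on_mult_bounded[OF v XY])
  have sX: "(\<lambda>y. v y * (X y)\<^sup>2) summable_on UNIV"
    by (rule summable_on_mult_bounded[OF v X2])
  have sY: "(\<lambda>y. v y * (Y y)\<^sup>2) summable_on UNIV"
    by (rule summable_on_mult_bounded[OF v Y2])
  have "(\<Sum>\<^sub>\<infinity>y. 2 * c * d * (v y * (X y * Y y)))
      \<le> (\<Sum>\<^sub>\<infinity>y. d\<^sup>2 * (v y * (X y)\<^sup>2) + c\<^sup>2 * (v y * (Y y)\<^sup>2))"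
  proof (intro infsum_mono summable_on_cmult_right summable_on_add sZ sX sY)
    fix y
    have "2 * c * d * (X y * Y y) \<le> d\<^sup>2 * (X y)\<^sup>2 + c\<^sup>2 * (Y y)\<^sup>2"
      using zero_le_power2[of "d * X y - c * Y y"] by (simp add: power2_eq_square algebra_simps)
    then have "v y * (2 * c * d * (X y * Y y)) \<le> v y * (d\<^sup>2 * (X y)\<^sup>2 + c\<^sup>2 * (Y y)\<^sup>2)"
      by (rule mult_left_mono[OF _ v(2)])
    then show "2 * c * d * (v y * (X y * Y y)) \<le> d\<^sup>2 * (v y * (X y)\<^sup>2) + c\<^sup>2 * (v y * (Y y)\<^sup>2)"
      by (simp add: algebra_simps)
  qed
  then show ?thesis
    unfolding infsum_add[OF summable_on_cmult_right[OF sX] summable_on_cmult_right[OF sY]]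
      infsum_cmult_right' .
qed

lemma kantorovich_product_le:
  fixes v X Y :: "'y \<Rightarrow> real"
  assumes v: "v summable_on UNIV" "\<And>y. 0 \<le> v y"
    and X: "0 < a1" "\<And>y. a1 \<le> X y \<and> X y \<le> b1" and KX: "kantorovich_const a1 b1 \<le> C"
    and Y: "0 < a2" "\<And>y. a2 \<le> Y y \<and> Y y \<le> b2" and KY: "kantorovich_const a2 b2 \<le> C"
  shows "infsum v UNIV * (\<Sum>\<^sub>\<infinity>y. v y * (X y * Y y))
           \<le> C * (\<Sum>\<^sub>\<infinity>y. v y * X y) * (\<Sum>\<^sub>\<infinity>y. v y * Y y)"
proof -
  define A where "A = infsum v UNIV"
  define d1 where "d1 = (\<Sum>\<^sub>\<infinity>y. v y * X y)"
  define d2 where "d2 = (\<Sum>\<^sub>\<infinity>y. v y * Y y)"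
  define Q1 where "Q1 = (\<Sum>\<^sub>\<infinity>y. v y * (X y)\<^sup>2)"
  define Q2 where "Q2 = (\<Sum>\<^sub>\<infinity>y. v y * (Y y)\<^sup>2)"
  define Z where "Z = (\<Sum>\<^sub>\<infinity>y. v y * (X y * Y y))"
  have A: "0 \<le> A"
    unfolding A_def by (simp add: infsum_nonneg v(2))
  have X_abs: "\<bar>X y\<bar> \<le> b1" and Y_abs: "\<bar>Y y\<bar> \<le> b2" for y
    using X(1) X(2)[of y] Y(1) Y(2)[of y] by (auto simp: abs_le_iff)
  have d1: "a1 * A \<le> d1" "d1 \<le> b1 * A"
    unfolding A_def d1_def by (rule infsum_mult_bounds[OF v X(2)])+
  have d2: "a2 * A \<le> d2"
    unfolding A_def d2_def by (rule infsum_mult_bounds(1)[OF v Y(2)])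
  have Q1: "A * Q1 \<le> C * d1\<^sup>2"
    unfolding A_def Q1_def d1_def
    by (rule order_trans[OF kantorovich_inequality[OF v X] mult_right_mono[OF KX zero_le_power2]])
  have Q2: "A * Q2 \<le> C * d2\<^sup>2"
    unfolding A_def Q2_def d2_def
    by (rule order_trans[OF kantorovich_inequality[OF v Y] mult_right_mono[OF KY zero_le_power2]])
  show ?thesis
  proof (cases "A = 0")
    case True
    then show ?thesis
      using d1 by (simp add: A_def d1_def)
  next
    case False
    then have d: "0 < d1" "0 < d2"
      using A d1(1) d2 X(1) Y(1) by (smt (verit) mult_pos_pos)+
    have "A * (2 * d1 * d2 * Z) \<le> A * (d2\<^sup>2 * Q1 + d1\<^sup>2 * Q2)"
    proof (rule mult_left_mono[OF _ A])
      show "2 * d1 * d2 * Z \<le> d2\<^sup>2 * Q1 + d1\<^sup>2 * Q2"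
        unfolding Z_def Q1_def Q2_def by (rule infsum_mult_cross_le[OF v X_abs Y_abs])
    qed
    also have "\<dots> = d2\<^sup>2 * (A * Q1) + d1\<^sup>2 * (A * Q2)"
      by (simp add: algebra_simps)
    also have "\<dots> \<le> d2\<^sup>2 * (C * d1\<^sup>2) + d1\<^sup>2 * (C * d2\<^sup>2)"
      using Q1 Q2 by (intro add_mono mult_left_mono) auto
    finally have "(2 * d1 * d2) * (A * Z) \<le> (2 * d1 * d2) * (C * d1 * d2)"
      by (simp add: power2_eq_square algebra_simps)
    then show ?thesis
      using d by (simp add: A_def Z_def d1_def d2_def mult_le_cancel_left_pos)
  qed
qed

lemma laplace_sum_product_le:
  fixes v f :: "'y \<Rightarrow> real"
  assumes v: "v summable_on UNIV" "\<And>y. 0 \<le> v y" and f: "\<And>y. m \<le> f y \<and> f y \<le> M"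
    and s1: "0 \<le> s1" "s1 \<le> T" and s2: "0 \<le> s2" "s2 \<le> T"
  shows "laplace_sum v f 0 * laplace_sum v f (s1 + s2)
           \<le> exp ((T * (M - m))\<^sup>2 / 4) * laplace_sum v f s1 * laplace_sum v f s2"
proof -
  have mM: "m \<le> M" using f[of undefined] by linarith
  have range: "exp (- s * M) \<le> exp (- s * f y) \<and> exp (- s * f y) \<le> exp (- s * m)"
    if "0 \<le> s" for s y
    using f[of y] that by (simp add: mult_left_mono)
  have K: "kantorovich_const (exp (- s * M)) (exp (- s * m)) \<le> exp ((T * (M - m))\<^sup>2 / 4)"
    if "0 \<le> s" "s \<le> T" for s
  proof -
    have "kantorovich_const (exp (- s * M)) (exp (- s * m)) \<le> exp ((- s * m - - s * M)\<^sup>2 / 4)"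
      by (rule kantorovich_const_exp_le) (use that mM in \<open>simp add: mult_left_mono\<close>)
    also have "\<dots> = exp ((s * (M - m))\<^sup>2 / 4)"
      by (simp add: algebra_simps)
    also have "\<dots> \<le> exp ((T * (M - m))\<^sup>2 / 4)"
      using that mM by (simp add: power_mono mult_right_mono)
    finally show ?thesis .
  qed
  have "infsum v UNIV * (\<Sum>\<^sub>\<infinity>y. v y * (exp (- s1 * f y) * exp (- s2 * f y)))
      \<le> exp ((T * (M - m))\<^sup>2 / 4)
        * (\<Sum>\<^sub>\<infinity>y. v y * exp (- s1 * f y)) * (\<Sum>\<^sub>\<infinity>y. v y * exp (- s2 * f y))"
    by (rule kantorovich_product_le[OF v exp_gt_zero range[OF s1(1)] K[OF s1]
          exp_gt_zero range[OF s2(1)] K[OF s2]])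
  moreover have "(\<Sum>\<^sub>\<infinity>y. v y * (exp (- s1 * f y) * exp (- s2 * f y)))
      = laplace_sum v f (s1 + s2)"
    unfolding laplace_sum_def by (rule infsum_cong) (simp add: algebra_simps flip: exp_add)
  ultimately show ?thesis
    by (simp add: laplace_sum_def)
qed

text \<open>If \<open>\<Phi>' = -D\<close>, this is the mixed partial derivative \<open>\<partial>\<^sub>1\<partial>\<^sub>2\<close> of
  \<open>exp (n (\<Phi>(s\<^sub>1) \<Phi>(s\<^sub>2) - 1))\<close>.\<close>

definition mixed_kernel :: "(real \<Rightarrow> real) \<Rightarrow> (real \<Rightarrow> real) \<Rightarrow> nat \<Rightarrow> real \<times> real \<Rightarrow> real"
  where "mixed_kernel \<Phi> D n z =
    (real n ^ 2 * \<Phi> (fst z) * \<Phi> (snd z) + real n) * D (fst z) * D (snd z)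
      * exp (real n * (\<Phi> (fst z) * \<Phi> (snd z) - 1))"

context
  fixes \<Phi> D :: "real \<Rightarrow> real"
  assumes has_deriv: "\<And>s. (\<Phi> has_real_derivative - D s) (at s)"
    and continuous_D: "continuous_on UNIV D"
    and Phi_0: "\<Phi> 0 = 1"
    and Phi_nonneg: "\<And>s. 0 \<le> s \<Longrightarrow> 0 \<le> \<Phi> s"
    and D_nonneg: "\<And>s. 0 \<le> s \<Longrightarrow> 0 \<le> D s"
begin

lemma continuous_on_Phi_comp [continuous_intros]:
  assumes "continuous_on S g"
  shows "continuous_on S (\<lambda>x. \<Phi> (g x))"
proof (rule continuous_on_compose2[OF _ assms])
  show "continuous_on UNIV \<Phi>"
    using has_deriv DERIV_isCont continuous_at_imp_continuous_on by blast
qed simp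

lemma continuous_on_D_comp [continuous_intros]:
  assumes "continuous_on S g"
  shows "continuous_on S (\<lambda>x. D (g x))"
  by (rule continuous_on_compose2[OF continuous_D assms]) simp

lemma continuous_on_mixed_kernel: "continuous_on S (mixed_kernel \<Phi> D n)"
  unfolding mixed_kernel_def by (intro continuous_intros)

lemma mixed_kernel_nonneg:
  assumes "0 \<le> s1" "0 \<le> s2"
  shows "0 \<le> mixed_kernel \<Phi> D n (s1, s2)"
  using assms Phi_nonneg D_nonneg by (simp add: mixed_kernel_def)

lemma integral_mixed_kernel_slice:
  assumes T: "0 \<le> T"
  shows "(\<integral>y. indicator {0..T} y *\<^sub>R mixed_kernel \<Phi> D n (x, y) \<partial>lborel)
    = real n * D x * exp (real n * (\<Phi> x - 1))
      - real n * D x * \<Phi> T * exp (real n * (\<Phi> x * \<Phi> T - 1))"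
proof -
  define G where "G y = - real n * D x * \<Phi> y * exp (real n * (\<Phi> x * \<Phi> y - 1))" for y
  have "(\<integral>y. indicator {0..T} y *\<^sub>R mixed_kernel \<Phi> D n (x, y) \<partial>lborel) = G T - G 0"
  proof (rule integral_FTC_atLeastAtMost[OF T])
    fix y
    have "(G has_real_derivative mixed_kernel \<Phi> D n (x, y)) (at y within {0..T})"
      unfolding G_def mixed_kernel_def
      by (auto intro!: derivative_eq_intros has_field_derivative_at_within[OF has_deriv]
          simp: algebra_simps power2_eq_square)
    then show "(G has_vector_derivative mixed_kernel \<Phi> D n (x, y)) (at y within {0..T})"
      by (simp add: has_real_derivative_iff_has_vector_derivative)
  next
    have "continuous_on {0..T} (\<lambda>y. (x, y))"
      by (intro continuous_intros)
    then show "continuous_on {0..T} (\<lambda>y. mixed_kernel \<Phi> D n (x, y))"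
      by (rule continuous_on_compose2[OF continuous_on_mixed_kernel[where S = UNIV]]) simp
  qed
  then show ?thesis
    by (simp add: G_def Phi_0)
qed

lemma integral_exp_Phi_deriv_le:
  assumes T: "0 \<le> T"
  shows "integrable lborel (\<lambda>x. indicator {0..T} x *\<^sub>R (real n * D x * exp (real n * (\<Phi> x - 1))))"
    and "(\<integral>x. indicator {0..T} x *\<^sub>R (real n * D x * exp (real n * (\<Phi> x - 1))) \<partial>lborel)
           \<le> 1 - exp (- real n)"
proof -
  define g where "g x = real n * D x * exp (real n * (\<Phi> x - 1))" for x
  have g: "continuous_on {0..T} g"
    unfolding g_def by (intro continuous_intros)
  then show "integrable lborel (\<lambda>x. indicator {0..T} x *\<^sub>R (real n * D x * exp (real n * (\<Phi> x - 1))))"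
    using borel_integrable_atLeastAtMost' unfolding set_integrable_def g_def by blast
  have "(\<integral>x. indicator {0..T} x *\<^sub>R g x \<partial>lborel)
      = - exp (real n * (\<Phi> T - 1)) - - exp (real n * (\<Phi> 0 - 1))"
  proof (rule integral_FTC_atLeastAtMost[OF T _ g])
    fix x
    have "((\<lambda>x. - exp (real n * (\<Phi> x - 1))) has_real_derivative g x) (at x within {0..T})"
      unfolding g_def
      by (auto intro!: derivative_eq_intros has_field_derivative_at_within[OF has_deriv])
    then show "((\<lambda>x. - exp (real n * (\<Phi> x - 1))) has_vector_derivative g x) (at x within {0..T})"
      by (simp add: has_real_derivative_iff_has_vector_derivative)
  qed
  also have "\<dots> \<le> 1 - exp (- real n)"
    using Phi_nonneg[OF T] by (simp add: Phi_0 algebra_simps)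
  finally show "(\<integral>x. indicator {0..T} x *\<^sub>R (real n * D x * exp (real n * (\<Phi> x - 1))) \<partial>lborel)
      \<le> 1 - exp (- real n)"
    by (simp add: g_def)
qed

lemma integral_mixed_kernel_square:
  assumes T: "0 \<le> T"
  shows "integrable lborel (\<lambda>z. indicator ({0..T} \<times> {0..T}) z *\<^sub>R mixed_kernel \<Phi> D n z)"
    and "(\<integral>z. indicator ({0..T} \<times> {0..T}) z *\<^sub>R mixed_kernel \<Phi> D n z \<partial>lborel)
           \<le> 1 - exp (- real n)"
proof -
  define S :: "(real \<times> real) set" where "S = {0..T} \<times> {0..T}"
  define g where "g x = real n * D x * exp (real n * (\<Phi> x - 1))" for x
  show int: "integrable lborel (\<lambda>z. indicator ({0..T} \<times> {0..T}) z *\<^sub>R mixed_kernel \<Phi> D n z)"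
    by (intro borel_integrable_compact compact_Times compact_Icc continuous_on_mixed_kernel)
  then have int_prod: "integrable (lborel \<Otimes>\<^sub>M lborel) (\<lambda>z. indicator S z *\<^sub>R mixed_kernel \<Phi> D n z)"
    by (simp add: S_def lborel_prod)
  have slice_le: "(\<integral>y. indicator S (x, y) *\<^sub>R mixed_kernel \<Phi> D n (x, y) \<partial>lborel)
      \<le> indicator {0..T} x *\<^sub>R g x" for x
  proof (cases "x \<in> {0..T}")
    case True
    then have "0 \<le> real n * D x * \<Phi> T * exp (real n * (\<Phi> x * \<Phi> T - 1))"
      using T D_nonneg Phi_nonneg by simp
    then show ?thesis
      using True integral_mixed_kernel_slice[OF T, where x = x]
      by (simp add: S_def indicator_times g_def)
  qed (simp add: S_def indicator_times)
  have "(\<integral>z. indicator S z *\<^sub>R mixed_kernel \<Phi> D n z \<partial>lborel)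
      = (\<integral>x. (\<integral>y. indicator S (x, y) *\<^sub>R mixed_kernel \<Phi> D n (x, y) \<partial>lborel) \<partial>lborel)"
    unfolding lborel_pair.integral_fst'[OF int_prod] by (simp add: lborel_prod)
  also have "\<dots> \<le> (\<integral>x. indicator {0..T} x *\<^sub>R g x \<partial>lborel)"
    using lborel_pair.integrable_fst'[OF int_prod] integral_exp_Phi_deriv_le(1)[OF T]
    by (intro integral_mono slice_le) (simp_all add: g_def)
  also have "\<dots> \<le> 1 - exp (- real n)"
    unfolding g_def by (rule integral_exp_Phi_deriv_le(2)[OF T])
  finally show "(\<integral>z. indicator ({0..T} \<times> {0..T}) z *\<^sub>R mixed_kernel \<Phi> D n z \<partial>lborel)
      \<le> 1 - exp (- real n)"
    by (simp add: S_def)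
qed

lemma I0_integrand_le:
  assumes C: "0 \<le> C" and R0: "R0 \<Phi> p \<subseteq> {0..T} \<times> {0..T}"
    and product: "\<And>s1 s2. s1 \<in> {0..T} \<Longrightarrow> s2 \<in> {0..T} \<Longrightarrow> D 0 * D (s1 + s2) \<le> C * D s1 * D s2"
  shows "indicator (R0 \<Phi> p) z *\<^sub>R ((real n ^ 2 * \<Phi> (fst z) * \<Phi> (snd z) + real n) * D 0
           * D (fst z + snd z) * exp (real n * (\<Phi> (fst z) * \<Phi> (snd z) - 1)))
         \<le> C * (indicator ({0..T} \<times> {0..T}) z *\<^sub>R mixed_kernel \<Phi> D n z)"
proof (cases "z \<in> R0 \<Phi> p")
  case True
  then obtain s1 s2 where z: "z = (s1, s2)" "s1 \<in> {0..T}" "s2 \<in> {0..T}"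
    using R0 by auto
  define a where "a = (real n ^ 2 * \<Phi> s1 * \<Phi> s2 + real n) * exp (real n * (\<Phi> s1 * \<Phi> s2 - 1))"
  have a: "0 \<le> a"
    using Phi_nonneg z by (simp add: a_def)
  have "a * (D 0 * D (s1 + s2)) \<le> a * (C * D s1 * D s2)"
    by (rule mult_left_mono[OF product[OF z(2,3)] a])
  then show ?thesis
    using True z by (simp add: mixed_kernel_def a_def mult_ac)
next
  case False
  then show ?thesis
    using C mixed_kernel_nonneg by (auto simp: indicator_def)
qed

lemma I0_le:
  assumes n: "1 \<le> n" and C: "0 \<le> C" and T: "0 \<le> T"
    and R0: "R0 \<Phi> p \<subseteq> {0..T} \<times> {0..T}"
    and product: "\<And>s1 s2. s1 \<in> {0..T} \<Longrightarrow> s2 \<in> {0..T} \<Longrightarrow> D 0 * D (s1 + s2) \<le> C * D s1 * D s2"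
  shows "I0 \<Phi> n p \<le> C"
proof -
  define S :: "(real \<times> real) set" where "S = {0..T} \<times> {0..T}"
  define F where "F z = (real n ^ 2 * \<Phi> (fst z) * \<Phi> (snd z) + real n) * D 0 * D (fst z + snd z)
    * exp (real n * (\<Phi> (fst z) * \<Phi> (snd z) - 1))" for z
  have e: "0 < 1 - exp (- real n)"
    using n by simp
  have "(LINT z : R0 \<Phi> p | lborel. F z) \<le> C * (1 - exp (- real n))"
  proof (cases "set_integrable lborel (R0 \<Phi> p) F")
    case True
    then have "(LINT z : R0 \<Phi> p | lborel. F z)
        \<le> (\<integral>z. C * (indicator S z *\<^sub>R mixed_kernel \<Phi> D n z) \<partial>lborel)"
      unfolding set_lebesgue_integral_def set_integrable_def F_def S_def
      using integrable_mult_right[OF integral_mixed_kernel_square(1)[OF T]]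
      by (intro integral_mono I0_integrand_le[OF C R0 product]) auto
    also have "\<dots> \<le> C * (1 - exp (- real n))"
      using integral_mixed_kernel_square(2)[OF T] C by (simp add: S_def mult_left_mono)
    finally show ?thesis .
  qed (* a non-integrable function has Lebesgue integral 0 *)
    (use C e in \<open>simp add: set_lebesgue_integral_def set_integrable_def not_integrable_integral_eq\<close>)
  moreover have "I0 \<Phi> n p = (LINT z : R0 \<Phi> p | lborel. F z) / (1 - exp (- real n))"
    using DERIV_imp_deriv[OF has_deriv] by (simp add: I0_def F_def)
  ultimately show ?thesis
    using e by (simp add: divide_le_eq mult.commute)
qed

end

lemma R0_subset_square:
  assumes m: "0 < m" and p: "0 \<le> p" "p \<le> 1 / sqrt 2"
    and \<Phi>: "\<And>s. 0 \<le> s \<Longrightarrow> \<Phi> s \<le> exp (- s * m)"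
  shows "R0 \<Phi> p \<subseteq> {0..2 * p / m} \<times> {0..2 * p / m}"
proof -
  have "s \<le> 2 * p / m" if "0 \<le> s" "1 - p \<le> \<Phi> s" for s
  proof -
    have "exp (- 2 * p) \<le> exp (- s * m)"
      using exp_neg_two_mult_le_one_minus[OF p] that \<Phi>[OF that(1)] by linarith
    then show ?thesis
      using m by (simp add: pos_le_divide_eq mult.commute)
  qed
  then show ?thesis
    by (auto simp: R0_def)
qed

lemma I0_laplace_sum_le:
  fixes w f :: "'y \<Rightarrow> real"
  assumes w: "(w has_sum 1) UNIV" "\<And>y. 0 \<le> w y"
    and f: "\<And>y. m \<le> f y \<and> f y \<le> M" and m: "0 < m"
    and n: "1 \<le> n" and p: "0 \<le> p" "p \<le> 1 / sqrt 2"
  shows "I0 (laplace_sum w f) n p \<le> exp (p\<^sup>2 * (M / m - 1)\<^sup>2)"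
proof -
  define D where "D = laplace_sum (\<lambda>y. w y * f y) f"
  have ws: "w summable_on UNIV" and w_sum: "infsum w UNIV = 1"
    using w(1) by (auto simp: summable_on_def infsumI)
  have f_abs: "\<bar>f y\<bar> \<le> M" and v0: "0 \<le> w y * f y" for y
    using f[of y] m w(2)[of y] by auto
  have v: "(\<lambda>y. w y * f y) summable_on UNIV"
    by (rule summable_on_mult_bounded[OF ws w(2) f_abs])
  have "I0 (laplace_sum w f) n p \<le> exp ((2 * p / m * (M - m))\<^sup>2 / 4)"
  proof (rule I0_le[where D = D and T = "2 * p / m"])
    show "(laplace_sum w f has_real_derivative - D s) (at s)" for s
      unfolding D_def by (rule has_field_derivative_laplace_sum[OF ws w(2) f_abs])
    show "continuous_on UNIV D"
      unfolding D_def by (rule continuous_on_laplace_sum[OF v v0 f_abs])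
    show "laplace_sum w f 0 = 1" "0 \<le> laplace_sum w f s" "0 \<le> D s" for s
      using w_sum w(2) v0 by (simp_all add: D_def laplace_sum_def infsum_nonneg)
    have "laplace_sum w f s \<le> exp (- s * m)" if "0 \<le> s" for s
      using laplace_sum_le[OF ws w(2) _ that, where m = m] f w_sum by simp
    then show "R0 (laplace_sum w f) p \<subseteq> {0..2 * p / m} \<times> {0..2 * p / m}"
      by (rule R0_subset_square[OF m p])
    show "D 0 * D (s1 + s2) \<le> exp ((2 * p / m * (M - m))\<^sup>2 / 4) * D s1 * D s2"
      if "s1 \<in> {0..2 * p / m}" "s2 \<in> {0..2 * p / m}" for s1 s2
      using that unfolding D_def by (intro laplace_sum_product_le[OF v v0 f]) auto
  qed (use n p m in auto)
  also have "\<dots> = exp (p\<^sup>2 * (M / m - 1)\<^sup>2)"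
    using m by (simp add: field_simps power2_eq_square)
  finally show ?thesis .
qed

theorem lemmaD3:
  fixes pt pg r :: "'x \<Rightarrow> 'y::countable \<Rightarrow> real"
    and \<beta> :: real and x0 :: 'x and n :: nat and phimax phimin :: real
  assumes beta_pos: "\<beta> > 0"
    and pt_pos: "\<And>x y. pt x y > 0" and pt_sum: "\<And>x. ((\<lambda>y. pt x y) has_sum 1) UNIV"
    and pg_pos: "\<And>x y. pg x y > 0" and pg_sum: "\<And>x. ((\<lambda>y. pg x y) has_sum 1) UNIV"
    and max_bound: "\<And>x y. phi_beta pt pg r \<beta> x y \<le> phimax"
    and max_att: "\<exists>x y. phi_beta pt pg r \<beta> x y = phimax"
    and min_bound: "\<And>x y. phimin \<le> phi_beta pt pg r \<beta> x y"
    and min_att: "\<exists>x y. phi_beta pt pg r \<beta> x y = phimin"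
    and n_pos: "n \<ge> 1"
    and p_lo: "0 \<le> ln (real n ^ 4) / real n"
    and p_hi: "ln (real n ^ 4) / real n \<le> 1 / sqrt 2"
  shows "I0 (Phi_beta pg (phi_beta pt pg r \<beta>) x0) n (ln (real n ^ 4) / real n)
           \<le> exp ((ln (real n ^ 4) / real n)^2 * (phimax / phimin - 1)^2)"
proof -
  have "0 < phi_beta pt pg r \<beta> x y" for x y
    using pt_pos[of x y] pg_pos[of x y] by (simp add: phi_beta_def)
  then have "0 < phimin"
    using min_att by metis
  moreover have "Phi_beta pg (phi_beta pt pg r \<beta>) x0 = laplace_sum (pg x0) (phi_beta pt pg r \<beta> x0)"
    by (simp add: fun_eq_iff Phi_beta_def laplace_sum_def)
  ultimately show ?thesis
    using I0_laplace_sum_le[OF pg_sum[of x0] less_imp_le[OF pg_pos] _ _ n_pos p_lo p_hi]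
      min_bound max_bound by simp
qed

end
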